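(* If some set maximizing $\widehat{sw}$ over nonempty subsets of $\mathbb{S}$ has cardinality $k$, then $\{1,2,\dots,k\}$ also maximizes $\widehat{sw}$ over nonempty subsets of $\mathbb{S}$.
   Context: Sellers $\mathbb{S}=\{1,\dots,n\}$ with product qualities $\theta_1\ge\theta_2\ge\dots\ge\theta_n\ge0$. Let $W$ be the Lambert W function on $[0,\infty)$ ($W(x)e^{W(x)}=x$) and $w_i=W(e^{\theta_i-1})$, so $w_1\ge\dots\ge w_n>0$. For nonempty $S\subseteq\mathbb{S}$, the Cournot-equilibrium social welfare when $S$ is displayed is $\widehat{sw}(S)=\log(1+\sum_{i\in S}w_i)+\frac{\sum_{i\in S}(w_i^2+w_i)}{1+\sum_{i\in S}w_i}$. *)

theory Defs
  imports "HOL-Analysis.Analysis"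
begin

definition lambertW :: "real \<Rightarrow> real" where
  "lambertW x = (THE w. w \<ge> 0 \<and> w * exp w = x)"

definition wq :: "(nat \<Rightarrow> real) \<Rightarrow> nat \<Rightarrow> real" where
  "wq \<theta> i = lambertW (exp (\<theta> i - 1))"

text \<open>Cournot-equilibrium social welfare of displayed set S.\<close>
definition sw_hat :: "(nat \<Rightarrow> real) \<Rightarrow> nat set \<Rightarrow> real" where
  "sw_hat \<theta> S = ln (1 + (\<Sum>i\<in>S. wq \<theta> i))
     + (\<Sum>i\<in>S. (wq \<theta> i)\<^sup>2 + wq \<theta> i) / (1 + (\<Sum>i\<in>S. wq \<theta> i))"

definition is_sw_max :: "nat \<Rightarrow> (nat \<Rightarrow> real) \<Rightarrow> nat set \<Rightarrow> bool" where
  "is_sw_max n \<theta> S \<longleftrightarrow> S \<subseteq> {1..n} \<and> S \<noteq> {} \<and>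
     (\<forall>T. T \<subseteq> {1..n} \<and> T \<noteq> {} \<longrightarrow> sw_hat \<theta> T \<le> sw_hat \<theta> S)"

end

theory Submission imports Defs begin

text \<open>Fix a maximizer S, a seller j \<in> S and the rest T = S - {j}. As a function of the weight x
  of the one seller added to T, the welfare is ln (1 + R + x) + (Q + x^2 + x) / (1 + R + x), where
  R and Q are the sums of w_k and w_k^2 + w_k over T. Its derivative has the sign of a strictly
  increasing quadratic, so the function can only decrease and then increase. Optimality of S
  (compared with T, or trivially if T is empty) makes the value at w_j at least the value at 0,
  so w_j already lies on the increasing branch, and exchanging j for a seller i < j of larger
  weight w_i does not decrease the welfare. Exchanging repeatedly turns S into {1..card S}.\<close>

lemma mult_exp_strict_mono: "(0::real) \<le> a \<Longrightarrow> a < b \<Longrightarrow> a * exp a < b * exp b"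
proof -
  assume ab: "0 \<le> a" "a < b"
  have "a * exp a \<le> a * exp b" using ab by (intro mult_left_mono) auto
  also have "\<dots> < b * exp b" using ab by (intro mult_strict_right_mono) auto
  finally show ?thesis .
qed

lemma lambertW:
  assumes "(x::real) > 0"
  shows "lambertW x \<ge> 0" and "lambertW x * exp (lambertW x) = x"
proof -
  have "\<exists>w. 0 \<le> w \<and> w \<le> x \<and> w * exp w = x"
    using assms by (intro IVT[where f = "\<lambda>w. w * exp w"]) (auto intro!: continuous_intros)
  then obtain w where w: "0 \<le> w" "w * exp w = x" by blast
  have "v = w" if "0 \<le> v" "v * exp v = x" for v
    using mult_exp_strict_mono that w by (metis linorder_neqE_linordered_idom order_less_irrefl)
  with w have "\<exists>!w. 0 \<le> w \<and> w * exp w = x" by blast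
  from theI'[OF this] show "lambertW x \<ge> 0" "lambertW x * exp (lambertW x) = x"
    unfolding lambertW_def by auto
qed

lemma lambertW_pos: "(x::real) > 0 \<Longrightarrow> lambertW x > 0"
  using lambertW[of x] by (metis less_eq_real_def mult_zero_left)

lemma lambertW_mono: "(0::real) < x \<Longrightarrow> x \<le> y \<Longrightarrow> lambertW x \<le> lambertW y"
  using lambertW[of x] lambertW[of y] mult_exp_strict_mono[of "lambertW y" "lambertW x"]
  by force

lemma wq_pos: "wq \<theta> i > 0"
  unfolding wq_def by (rule lambertW_pos) simp

lemma wq_antimono: "\<theta> j \<le> \<theta> i \<Longrightarrow> wq \<theta> j \<le> wq \<theta> i"
  unfolding wq_def by (intro lambertW_mono) auto

lemma single_crossing_deriv_mono:
  fixes f d :: "real \<Rightarrow> real"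
  assumes deriv: "\<And>x. 0 \<le> x \<Longrightarrow> (f has_real_derivative d x) (at x)"
    and crossing: "\<And>x y. 0 \<le> x \<Longrightarrow> x < y \<Longrightarrow> d x \<ge> 0 \<Longrightarrow> d y > 0"
    and ab: "0 < a" "a \<le> b" and f0: "f 0 \<le> f a"
  shows "f a \<le> f b"
proof (cases "d a \<ge> 0")
  case True
  have "continuous_on {a..b} f"
    using ab deriv by (intro DERIV_atLeastAtMost_imp_continuous_on) (meson less_le_trans less_imp_le)
  moreover have "\<exists>y. (f has_real_derivative y) (at x) \<and> y \<ge> 0" if "a < x" "x < b" for x
    using that ab True deriv crossing[of a x] by (intro exI[of _ "d x"]) auto
  ultimately show ?thesis using DERIV_nonneg_imp_increasing_open[OF ab(2)] by blast
next
  case False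
  have "d x < 0" if "0 \<le> x" "x \<le> a" for x
    using that False crossing[of x a] by (cases "x < a") (auto simp: not_le, meson not_le)
  then have "f 0 > f a"
    using deriv by (intro DERIV_neg_imp_decreasing[OF ab(1)]) auto
  with f0 show ?thesis by simp
qed

definition sw_add :: "real \<Rightarrow> real \<Rightarrow> real \<Rightarrow> real" where
  "sw_add R Q x = ln (1 + R + x) + (Q + x\<^sup>2 + x) / (1 + R + x)"

lemma sw_add_deriv:
  assumes "R \<ge> 0" "x \<ge> 0"
  shows "(sw_add R Q has_real_derivative
           (x\<^sup>2 + (2*R + 3) * x + 2 + 2*R - Q) / (1 + R + x)\<^sup>2) (at x)"
proof -
  have pos: "1 + R + x > 0" using assms by auto
  have "(sw_add R Q has_real_derivative
          1 / (1+R+x) + ((2*x + 1) * (1+R+x) - (Q + x\<^sup>2 + x)) / (1+R+x)\<^sup>2) (at x)"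
    unfolding sw_add_def using pos
    by (auto intro!: derivative_eq_intros simp: power2_eq_square)
  moreover have "1 / (1+R+x) + ((2*x + 1) * (1+R+x) - (Q + x\<^sup>2 + x)) / (1+R+x)\<^sup>2
      = ((1+R+x) + ((2*x + 1) * (1+R+x) - (Q + x\<^sup>2 + x))) / (1+R+x)\<^sup>2"
  proof -
    have "1 / (1+R+x) = (1+R+x) / (1+R+x)\<^sup>2"
      using pos by (simp add: power2_eq_square)
    then show ?thesis by (simp only: add_divide_distrib[symmetric])
  qed
  moreover have "(1+R+x) + ((2*x + 1) * (1+R+x) - (Q + x\<^sup>2 + x))
      = x\<^sup>2 + (2*R + 3) * x + 2 + 2*R - Q"
    by (simp add: algebra_simps power2_eq_square)
  ultimately show ?thesis by simp
qed

lemma sw_add_mono: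
  assumes "R \<ge> 0" "0 < a" "a \<le> b" "sw_add R Q 0 \<le> sw_add R Q a"
  shows "sw_add R Q a \<le> sw_add R Q b"
proof (rule single_crossing_deriv_mono[OF sw_add_deriv[OF \<open>R \<ge> 0\<close>] _ assms(2-4)])
  fix x y :: real
  assume xy: "0 \<le> x" "x < y" and nonneg: "0 \<le> (x\<^sup>2 + (2*R + 3) * x + 2 + 2*R - Q) / (1 + R + x)\<^sup>2"
  have "y\<^sup>2 + (2*R + 3) * y - (x\<^sup>2 + (2*R + 3) * x) = (y - x) * (y + x + 2*R + 3)"
    by (simp add: algebra_simps power2_eq_square)
  also have "\<dots> > 0" using xy \<open>R \<ge> 0\<close> by auto
  finally show "0 < (y\<^sup>2 + (2*R + 3) * y + 2 + 2*R - Q) / (1 + R + y)\<^sup>2"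
    using nonneg xy \<open>R \<ge> 0\<close> by (auto simp: zero_le_divide_iff)
qed

lemma sw_hat_insert:
  assumes "finite T" "j \<notin> T"
  shows "sw_hat \<theta> (insert j T)
           = sw_add (\<Sum>i\<in>T. wq \<theta> i) (\<Sum>i\<in>T. (wq \<theta> i)\<^sup>2 + wq \<theta> i) (wq \<theta> j)"
  using assms unfolding sw_hat_def sw_add_def by (simp add: algebra_simps)

lemma sw_hat_eq_sw_add_0:
  "sw_hat \<theta> T = sw_add (\<Sum>i\<in>T. wq \<theta> i) (\<Sum>i\<in>T. (wq \<theta> i)\<^sup>2 + wq \<theta> i) 0"
  unfolding sw_hat_def sw_add_def by simp

lemma is_sw_max_exchange:
  assumes max: "is_sw_max n \<theta> S" and "\<theta> j \<le> \<theta> i"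
    and "j \<in> S" "1 \<le> i" "i \<le> n" "i \<notin> S"
  shows "is_sw_max n \<theta> (insert i (S - {j}))"
proof -
  define T where "T = S - {j}"
  define R where "R = (\<Sum>k\<in>T. wq \<theta> k)"
  define Q where "Q = (\<Sum>k\<in>T. (wq \<theta> k)\<^sup>2 + wq \<theta> k)"
  have S: "S \<subseteq> {1..n}" and best: "\<And>T. T \<subseteq> {1..n} \<Longrightarrow> T \<noteq> {} \<Longrightarrow> sw_hat \<theta> T \<le> sw_hat \<theta> S"
    using max unfolding is_sw_max_def by auto
  have "finite T" using S T_def finite_subset by blast
  have "R \<ge> 0" unfolding R_def using wq_pos by (intro sum_nonneg) (auto intro: less_imp_le)
  have swS: "sw_hat \<theta> S = sw_add R Q (wq \<theta> j)"
    using sw_hat_insert[OF \<open>finite T\<close>, of j \<theta>] \<open>j \<in> S\<close>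
    unfolding T_def R_def Q_def by (simp add: insert_absorb)
  have swiT: "sw_hat \<theta> (insert i T) = sw_add R Q (wq \<theta> i)"
    using sw_hat_insert[OF \<open>finite T\<close>, of i \<theta>] \<open>i \<notin> S\<close> unfolding T_def R_def Q_def by simp
  have "sw_add R Q 0 \<le> sw_add R Q (wq \<theta> j)"
  proof (cases "T = {}")
    case True
    then have "R = 0" "Q = 0" unfolding R_def Q_def by auto
    moreover have "0 \<le> ln (1 + wq \<theta> j) + ((wq \<theta> j)\<^sup>2 + wq \<theta> j) / (1 + wq \<theta> j)"
      using wq_pos[of \<theta> j] by (intro add_nonneg_nonneg) auto
    ultimately show ?thesis unfolding sw_add_def by simp
  next
    case False
    then have "sw_hat \<theta> T \<le> sw_hat \<theta> S" using S T_def by (intro best) auto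
    then show ?thesis using swS sw_hat_eq_sw_add_0[of \<theta> T] unfolding R_def Q_def by simp
  qed
  then have "sw_add R Q (wq \<theta> j) \<le> sw_add R Q (wq \<theta> i)"
    using sw_add_mono[OF \<open>R \<ge> 0\<close> wq_pos wq_antimono[OF \<open>\<theta> j \<le> \<theta> i\<close>]] by blast
  then have "sw_hat \<theta> S \<le> sw_hat \<theta> (insert i T)" using swS swiT by simp
  moreover have "insert i T \<subseteq> {1..n}" using S T_def assms(4,5) by auto
  ultimately show ?thesis
    using best unfolding is_sw_max_def T_def by (meson order_trans insert_not_empty)
qed

text \<open>Each exchange strictly decreases the sum of the elements, which serves as the induction
  measure.\<close>

lemma exchange_to_initial_segment:
  fixes S :: "nat set"
  assumes "finite S" "0 \<notin> S" "P S"
    and exchange: "\<And>S i j. P S \<Longrightarrow> j \<in> S \<Longrightarrow> 1 \<le> i \<Longrightarrow> i < j \<Longrightarrow> i \<notin> S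
                     \<Longrightarrow> P (insert i (S - {j}))"
  shows "P {1..card S}"
  using assms(1-3)
proof (induction "\<Sum>S" arbitrary: S rule: less_induct)
  case less
  show ?case
  proof (cases "S = {1..card S}")
    case True
    with less.prems show ?thesis by simp
  next
    case False
    have "\<not> S \<subseteq> {1..card S}"
      using False card_subset_eq[of "{1..card S}" S] by auto
    then obtain j where "j \<in> S" "j \<notin> {1..card S}" by blast
    moreover have "j \<ge> 1" using \<open>j \<in> S\<close> \<open>0 \<notin> S\<close> by (cases j) auto
    ultimately have j: "j \<in> S" "j > card S" by auto
    have "\<not> {1..card S} \<subseteq> S"
    proof
      assume "{1..card S} \<subseteq> S"
      with j have "insert j {1..card S} \<subseteq> S" by auto
      from card_mono[OF \<open>finite S\<close> this] j show False by simp
    qed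
    then obtain i where i: "1 \<le> i" "i \<le> card S" "i \<notin> S" by (auto simp: subset_iff)
    define S' where "S' = insert i (S - {j})"
    have "card S' = card S"
      using \<open>finite S\<close> i j unfolding S'_def
      by (metis card.insert card_Suc_Diff1 finite_Diff insert_Diff_single insert_iff)
    have "\<Sum>S' + j = \<Sum>S + i"
      using \<open>finite S\<close> i j unfolding S'_def by (simp add: sum.remove)
    then have "\<Sum>S' < \<Sum>S" using i j by linarith
    moreover have "finite S'" "0 \<notin> S'" "P S'"
      using less.prems i j exchange unfolding S'_def by auto
    ultimately have "P {1..card S'}" by (rule less.hyps)
    with \<open>card S' = card S\<close> show ?thesis by simp
  qed
qed

theorem lemma7:
  fixes n :: nat and \<theta> :: "nat \<Rightarrow> real" and S :: "nat set"
  assumes "n \<ge> 1"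
    and "\<And>i j. 1 \<le> i \<Longrightarrow> i \<le> j \<Longrightarrow> j \<le> n \<Longrightarrow> \<theta> j \<le> \<theta> i"
    and "\<And>i. 1 \<le> i \<Longrightarrow> i \<le> n \<Longrightarrow> \<theta> i \<ge> 0"
    and "is_sw_max n \<theta> S"
  shows "is_sw_max n \<theta> {1..card S}"
proof (rule exchange_to_initial_segment[where P = "is_sw_max n \<theta>"])
  have "S \<subseteq> {1..n}" using \<open>is_sw_max n \<theta> S\<close> unfolding is_sw_max_def by blast
  then show "finite S" "0 \<notin> S" by (auto intro: finite_subset)
next
  fix S' i j
  assume max: "is_sw_max n \<theta> S'" and "j \<in> S'" "1 \<le> i" "i < j" "i \<notin> S'"
  have "S' \<subseteq> {1..n}" using max unfolding is_sw_max_def by blast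
  with \<open>j \<in> S'\<close> have "j \<le> n" by auto
  with \<open>1 \<le> i\<close> \<open>i < j\<close> have "\<theta> j \<le> \<theta> i" "i \<le> n" using assms(2) by simp_all
  then show "is_sw_max n \<theta> (insert i (S' - {j}))"
    using max \<open>j \<in> S'\<close> \<open>1 \<le> i\<close> \<open>i \<notin> S'\<close> by (intro is_sw_max_exchange)
qed (use assms(4) in auto)

end
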